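(* Let $C_n$ denote the cycle on $n \geq 3$ vertices. Then $\Gamma_b(C_3) = 1$, and for $n > 3$, \[ \Gamma_b(C_n) = \begin{cases} n-2 & \text{if } n \text{ is even},\\ n-3 & \text{if } n \text{ is odd}.\end{cases} \]
   Context: Let $G=(V,E)$ be a finite connected graph with distance $d(u,v)$. The eccentricity of $v$ is $e(v)=\max_{w\in V} d(v,w)$ and $\mathrm{diam}(G)=\max_v e(v)$. A broadcast on $G$ is a function $f: V \to \{0,1,\dots,\mathrm{diam}(G)\}$ with $f(v) \leq e(v)$ for all $v$; its cost is $\sum_{v\in V} f(v)$. The broadcast $f$ is dominating if for every $u \in V$ there is $v$ with $f(v)\geq 1$ and $d(u,v) \leq f(v)$. A dominating broadcast $f$ is minimal if decreasing the value $f(v)$ of any vertex $v$ with $f(v)>0$ yields a broadcast that is not dominating. The upper broadcast domination number $\Gamma_b(G)$ is the maximum cost of a minimal dominating broadcast on $G$. *)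

theory Defs
  imports Main
begin

inductive walk :: "'a set \<Rightarrow> ('a \<Rightarrow> 'a \<Rightarrow> bool) \<Rightarrow> 'a \<Rightarrow> nat \<Rightarrow> 'a \<Rightarrow> bool"
  for V E where
  walk_refl: "u \<in> V \<Longrightarrow> walk V E u 0 u"
| walk_step: "walk V E u k w \<Longrightarrow> v \<in> V \<Longrightarrow> E w v \<Longrightarrow> walk V E u (Suc k) v"

definition graph_dist :: "'a set \<Rightarrow> ('a \<Rightarrow> 'a \<Rightarrow> bool) \<Rightarrow> 'a \<Rightarrow> 'a \<Rightarrow> nat" where
  "graph_dist V E u v = (LEAST k. walk V E u k v)"

definition connected_graph :: "'a set \<Rightarrow> ('a \<Rightarrow> 'a \<Rightarrow> bool) \<Rightarrow> bool" where
  "connected_graph V E \<longleftrightarrow> finite V \<and> V \<noteq> {} \<and>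
     (\<forall>u v. E u v \<longrightarrow> u \<in> V \<and> v \<in> V \<and> u \<noteq> v \<and> E v u) \<and>
     (\<forall>u\<in>V. \<forall>v\<in>V. \<exists>k. walk V E u k v)"

definition ecc :: "'a set \<Rightarrow> ('a \<Rightarrow> 'a \<Rightarrow> bool) \<Rightarrow> 'a \<Rightarrow> nat" where
  "ecc V E v = Max ((graph_dist V E v) ` V)"

definition diam :: "'a set \<Rightarrow> ('a \<Rightarrow> 'a \<Rightarrow> bool) \<Rightarrow> nat" where
  "diam V E = Max ((ecc V E) ` V)"

text \<open>A broadcast: f v \<le> e(v) on V; f is zero outside V (a convention so that
the cost, a sum over V, captures f entirely). Since e(v) \<le> diam, the range
condition f v \<in> {0..diam} is implied.\<close>

definition broadcast :: "'a set \<Rightarrow> ('a \<Rightarrow> 'a \<Rightarrow> bool) \<Rightarrow> ('a \<Rightarrow> nat) \<Rightarrow> bool" where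
  "broadcast V E f \<longleftrightarrow> (\<forall>v\<in>V. f v \<le> diam V E \<and> f v \<le> ecc V E v) \<and> (\<forall>v. v \<notin> V \<longrightarrow> f v = 0)"

definition bcost :: "'a set \<Rightarrow> ('a \<Rightarrow> nat) \<Rightarrow> nat" where
  "bcost V f = (\<Sum>v\<in>V. f v)"

definition dominating_broadcast :: "'a set \<Rightarrow> ('a \<Rightarrow> 'a \<Rightarrow> bool) \<Rightarrow> ('a \<Rightarrow> nat) \<Rightarrow> bool" where
  "dominating_broadcast V E f \<longleftrightarrow> broadcast V E f \<and>
     (\<forall>u\<in>V. \<exists>v\<in>V. f v \<ge> 1 \<and> graph_dist V E u v \<le> f v)"

definition minimal_dominating_broadcast :: "'a set \<Rightarrow> ('a \<Rightarrow> 'a \<Rightarrow> bool) \<Rightarrow> ('a \<Rightarrow> nat) \<Rightarrow> bool" where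
  "minimal_dominating_broadcast V E f \<longleftrightarrow> dominating_broadcast V E f \<and>
     (\<forall>v\<in>V. \<forall>c. f v > 0 \<longrightarrow> c < f v \<longrightarrow> \<not> dominating_broadcast V E (f(v := c)))"

definition upper_broadcast_number :: "'a set \<Rightarrow> ('a \<Rightarrow> 'a \<Rightarrow> bool) \<Rightarrow> nat" where
  "upper_broadcast_number V E =
     Max (bcost V ` {f. minimal_dominating_broadcast V E f})"

definition cycle_adj :: "nat \<Rightarrow> nat \<Rightarrow> nat \<Rightarrow> bool" where
  "cycle_adj n i j \<longleftrightarrow> i < n \<and> j < n \<and> (j = (i + 1) mod n \<or> i = (j + 1) mod n)"

end

(*
  In a minimal dominating broadcast f every broadcasting vertex v has a private vertex u: one
  that hears no other broadcasting vertex and, if f v >= 2, lies at distance exactly f v from v.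
  The geodesic interval between v and u has at least f v + 1 vertices, and these intervals
  are pairwise disjoint; when u = v (so f v = 1) one uses v and its successor on the cycle
  instead.  Hence cost f + |V_f^+| <= n, so cost f <= n - 3 once three vertices broadcast.
  With exactly two broadcasting vertices, each value is smaller than the distance to the
  other's private vertex, so both are at most diam C_n - 1 = n div 2 - 1; with one it is at
  most n div 2.  These bounds are attained by one vertex broadcasting n div 2 and, for n >= 4,
  by two vertices at distance 1 (n even) or 2 (n odd) broadcasting n div 2 - 1.
*)

theory Submission
  imports Defs
begin

section \<open>Walks and distances\<close>

lemma walk_vertices: "walk V E u k v \<Longrightarrow> u \<in> V \<and> v \<in> V"
  by (induction rule: walk.induct) auto

lemma walk_append:
  assumes "walk V E u a w" and "walk V E w b v"
  shows "walk V E u (a + b) v"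
  using assms(2,1) by (induction rule: walk.induct) (auto intro: walk.intros)

lemma walk_Cons:
  assumes "E u w" "u \<in> V" "walk V E w k v"
  shows "walk V E u (Suc k) v"
proof -
  have "w \<in> V" using walk_vertices[OF assms(3)] by simp
  then have "walk V E u 1 w" using assms(1,2) walk_step[OF walk_refl] by simp
  from walk_append[OF this assms(3)] show ?thesis by simp
qed

lemma walk_rev:
  assumes "\<And>x y. E x y \<Longrightarrow> E y x"
  shows "walk V E u k v \<Longrightarrow> walk V E v k u"
proof (induction rule: walk.induct)
  case (walk_refl u)
  then show ?case by (rule walk.walk_refl)
next
  case (walk_step u k w v)
  then show ?case using walk_Cons assms by metis
qed

locale finite_connected_graph =
  fixes V :: "'a set" and E :: "'a \<Rightarrow> 'a \<Rightarrow> bool"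
  assumes connected: "connected_graph V E"
begin

lemma finite_vertices: "finite V"
  using connected unfolding connected_graph_def by simp

lemma edge_vertices: "E u v \<Longrightarrow> u \<in> V \<and> v \<in> V"
  using connected unfolding connected_graph_def by simp

lemma edge_irrefl: "\<not> E v v"
  using connected unfolding connected_graph_def by blast

lemma edge_sym: "E u v \<Longrightarrow> E v u"
  using connected unfolding connected_graph_def by simp

lemma walk_graph_dist: "u \<in> V \<Longrightarrow> v \<in> V \<Longrightarrow> walk V E u (graph_dist V E u v) v"
  using connected unfolding connected_graph_def graph_dist_def by (metis LeastI)

lemma graph_dist_le_walk: "walk V E u k v \<Longrightarrow> graph_dist V E u v \<le> k"
  unfolding graph_dist_def by (rule Least_le)

lemma graph_dist_self [simp]: "v \<in> V \<Longrightarrow> graph_dist V E v v = 0"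
  using graph_dist_le_walk[OF walk_refl] by simp

lemma graph_dist_eq_0_iff:
  assumes "u \<in> V" "v \<in> V"
  shows "graph_dist V E u v = 0 \<longleftrightarrow> u = v"
  using walk_graph_dist[OF assms] by (auto elim: walk.cases)

lemma graph_dist_commute: "u \<in> V \<Longrightarrow> v \<in> V \<Longrightarrow> graph_dist V E u v = graph_dist V E v u"
  by (meson antisym graph_dist_le_walk walk_graph_dist walk_rev edge_sym)

lemma graph_dist_triangle:
  assumes "u \<in> V" "v \<in> V" "w \<in> V"
  shows "graph_dist V E u w \<le> graph_dist V E u v + graph_dist V E v w"
  using graph_dist_le_walk[OF walk_append[OF walk_graph_dist walk_graph_dist]] assms by blast

lemma graph_dist_edge: "E u v \<Longrightarrow> graph_dist V E u v \<le> 1"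
  using graph_dist_le_walk[OF walk_step[OF walk_refl]] edge_vertices by fastforce

lemma graph_dist_le_ecc: "u \<in> V \<Longrightarrow> v \<in> V \<Longrightarrow> graph_dist V E u v \<le> ecc V E u"
  unfolding ecc_def using finite_vertices by simp

lemma ecc_attained: "u \<in> V \<Longrightarrow> \<exists>v\<in>V. graph_dist V E u v = ecc V E u"
  unfolding ecc_def using finite_vertices Max_in[of "graph_dist V E u ` V"] by fastforce

lemma ecc_le_diam: "v \<in> V \<Longrightarrow> ecc V E v \<le> diam V E"
  unfolding diam_def using finite_vertices by simp

definition geodesic_interval :: "'a \<Rightarrow> 'a \<Rightarrow> 'a set" where
  "geodesic_interval u v = {x \<in> V. graph_dist V E u x + graph_dist V E x v = graph_dist V E u v}"

lemma geodesic_interval_subset: "geodesic_interval u v \<subseteq> V"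
  unfolding geodesic_interval_def by blast

lemma finite_geodesic_interval: "finite (geodesic_interval u v)"
  using finite_subset[OF geodesic_interval_subset finite_vertices] .

lemma endpoint_in_geodesic_interval: "u \<in> V \<Longrightarrow> v \<in> V \<Longrightarrow> v \<in> geodesic_interval u v"
  unfolding geodesic_interval_def by simp

lemma geodesic_interval_mono:
  assumes "u \<in> V" "v \<in> V" and w: "w \<in> geodesic_interval u v"
  shows "geodesic_interval u w \<subseteq> geodesic_interval u v"
proof
  fix x assume x: "x \<in> geodesic_interval u w"
  have "w \<in> V" "x \<in> V" using w x geodesic_interval_subset by blast+
  have "graph_dist V E u v \<le> graph_dist V E u x + graph_dist V E x v"
    and "graph_dist V E x v \<le> graph_dist V E x w + graph_dist V E w v"
    using graph_dist_triangle assms \<open>w \<in> V\<close> \<open>x \<in> V\<close> by blast+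
  then show "x \<in> geodesic_interval u v"
    using w x unfolding geodesic_interval_def by auto
qed

lemma card_geodesic_interval_walk:
  "walk V E u k v \<Longrightarrow> k = graph_dist V E u v \<Longrightarrow> k + 1 \<le> card (geodesic_interval u v)"
proof (induction rule: walk.induct)
  case (walk_refl u)
  then have "u \<in> geodesic_interval u u"
    using endpoint_in_geodesic_interval[OF walk_refl.hyps walk_refl.hyps] by simp
  then show ?case using finite_geodesic_interval by (auto simp: Suc_le_eq card_gt_0_iff)
next
  case (walk_step u k w v)
  have "u \<in> V" "w \<in> V" using walk_vertices[OF walk_step.hyps(1)] by auto
  have "v \<in> V" using walk_step.hyps(2) .
  have "graph_dist V E u w \<le> k" using graph_dist_le_walk[OF walk_step.hyps(1)] .
  moreover have "graph_dist V E w v \<le> 1" using graph_dist_edge[OF walk_step.hyps(3)] .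
  moreover have "graph_dist V E u v \<le> graph_dist V E u w + graph_dist V E w v"
    using graph_dist_triangle \<open>u \<in> V\<close> \<open>w \<in> V\<close> \<open>v \<in> V\<close> by blast
  ultimately have uw: "graph_dist V E u w = k" and "w \<in> geodesic_interval u v"
    using walk_step.prems \<open>w \<in> V\<close> unfolding geodesic_interval_def by auto
  then have "insert v (geodesic_interval u w) \<subseteq> geodesic_interval u v"
    using geodesic_interval_mono endpoint_in_geodesic_interval \<open>u \<in> V\<close> \<open>v \<in> V\<close> by blast
  moreover have "v \<notin> geodesic_interval u w"
    using uw walk_step.prems unfolding geodesic_interval_def by auto
  ultimately have "card (geodesic_interval u w) + 1 \<le> card (geodesic_interval u v)"
    using card_mono[OF finite_geodesic_interval] finite_geodesic_interval
    by (metis Suc_eq_plus1 card_insert_disjoint)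
  then show ?case using walk_step.IH[OF uw[symmetric]] walk_step.prems by linarith
qed

lemma card_geodesic_interval:
  "u \<in> V \<Longrightarrow> v \<in> V \<Longrightarrow> graph_dist V E u v + 1 \<le> card (geodesic_interval u v)"
  using card_geodesic_interval_walk[OF walk_graph_dist refl] .

end

section \<open>Minimal dominating broadcasts\<close>

lemma upper_broadcast_number_eqI:
  assumes "\<And>f. minimal_dominating_broadcast V E f \<Longrightarrow> bcost V f \<le> b"
    and "minimal_dominating_broadcast V E g" "bcost V g = b"
  shows "upper_broadcast_number V E = b"
  unfolding upper_broadcast_number_def
proof (rule Max_eqI)
  show "finite (bcost V ` {f. minimal_dominating_broadcast V E f})"
    by (rule finite_subset[of _ "{..b}"]) (use assms(1) in auto)
  show "b \<in> bcost V ` {f. minimal_dominating_broadcast V E f}"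
    using assms(2,3) by blast
qed (use assms(1) in blast)

context finite_connected_graph
begin

definition broadcasting_vertices :: "('a \<Rightarrow> nat) \<Rightarrow> 'a set" where
  "broadcasting_vertices f = {v \<in> V. 0 < f v}"

lemma bcost_eq_sum_broadcasting_vertices: "bcost V f = (\<Sum>v \<in> broadcasting_vertices f. f v)"
  unfolding bcost_def broadcasting_vertices_def
  by (rule sum.mono_neutral_right) (auto simp: finite_vertices)

definition private_vertex :: "('a \<Rightarrow> nat) \<Rightarrow> 'a \<Rightarrow> 'a \<Rightarrow> bool" where
  "private_vertex f v u \<longleftrightarrow> u \<in> V \<and> graph_dist V E u v \<le> f v \<and>
     (2 \<le> f v \<longrightarrow> graph_dist V E u v = f v) \<and>
     (\<forall>w \<in> broadcasting_vertices f - {v}. f w < graph_dist V E u w)"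

lemma private_vertex_vertices: "private_vertex f v u \<Longrightarrow> u \<in> V"
  unfolding private_vertex_def by simp

lemma private_vertex_less_dist:
  "private_vertex f v u \<Longrightarrow> w \<in> broadcasting_vertices f \<Longrightarrow> w \<noteq> v \<Longrightarrow> f w < graph_dist V E u w"
  unfolding private_vertex_def by blast

lemma private_vertex_not_dominated:
  assumes u: "private_vertex f v u" and "c < f v"
  shows "\<not> dominating_broadcast V E (f(v := c))"
proof (rule notI)
  have "u \<in> V" using u unfolding private_vertex_def by simp
  assume "dominating_broadcast V E (f(v := c))"
  then obtain w where w: "w \<in> V" "1 \<le> (f(v := c)) w" "graph_dist V E u w \<le> (f(v := c)) w"
    using \<open>u \<in> V\<close> unfolding dominating_broadcast_def by blast
  show False
  proof (cases "w = v")
    case True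
    then have "1 \<le> c" "graph_dist V E u v \<le> c" using w by simp_all
    with \<open>c < f v\<close> have "2 \<le> f v" by linarith
    then have "graph_dist V E u v = f v"
      using u unfolding private_vertex_def by blast
    then show False using \<open>graph_dist V E u v \<le> c\<close> \<open>c < f v\<close> by simp
  next
    case False
    then have "w \<in> broadcasting_vertices f - {v}"
      using w unfolding broadcasting_vertices_def by simp
    then have "f w < graph_dist V E u w" using u unfolding private_vertex_def by blast
    then show False using w False by simp
  qed
qed

lemma minimal_dominating_broadcast_iff_private_vertex:
  assumes dom: "dominating_broadcast V E f"
  shows "minimal_dominating_broadcast V E f \<longleftrightarrow>
    (\<forall>v \<in> broadcasting_vertices f. \<exists>u. private_vertex f v u)"
proof
  assume min: "minimal_dominating_broadcast V E f"
  show "\<forall>v \<in> broadcasting_vertices f. \<exists>u. private_vertex f v u"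
  proof
    fix v assume v: "v \<in> broadcasting_vertices f"
    then have "v \<in> V" "0 < f v" unfolding broadcasting_vertices_def by auto
    define g where "g = f(v := f v - 1)"
    have "\<not> dominating_broadcast V E g"
      using min \<open>v \<in> V\<close> \<open>0 < f v\<close> unfolding minimal_dominating_broadcast_def g_def by simp
    moreover have "broadcast V E g"
      using dom \<open>v \<in> V\<close> unfolding dominating_broadcast_def broadcast_def g_def by auto
    ultimately obtain u where "u \<in> V"
      and undominated: "\<forall>w\<in>V. \<not> (1 \<le> g w \<and> graph_dist V E u w \<le> g w)"
      unfolding dominating_broadcast_def by blast
    obtain w where "w \<in> V" "1 \<le> f w" "graph_dist V E u w \<le> f w"
      using dom \<open>u \<in> V\<close> unfolding dominating_broadcast_def by blast
    have "w = v"
    proof (rule ccontr)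
      assume "w \<noteq> v"
      then show False
        using undominated[rule_format, OF \<open>w \<in> V\<close>] \<open>1 \<le> f w\<close> \<open>graph_dist V E u w \<le> f w\<close>
        unfolding g_def by simp
    qed
    have "graph_dist V E u v \<le> f v"
      using \<open>w = v\<close> \<open>graph_dist V E u w \<le> f w\<close> by simp
    moreover have "2 \<le> f v \<longrightarrow> graph_dist V E u v = f v"
      using undominated[rule_format, OF \<open>v \<in> V\<close>] \<open>graph_dist V E u v \<le> f v\<close>
      unfolding g_def by auto
    moreover have "f w' < graph_dist V E u w'" if "w' \<in> broadcasting_vertices f - {v}" for w'
      using undominated[rule_format, of w'] that unfolding broadcasting_vertices_def g_def by auto
    ultimately show "\<exists>u. private_vertex f v u"
      using \<open>u \<in> V\<close> unfolding private_vertex_def by blast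
  qed
next
  assume "\<forall>v \<in> broadcasting_vertices f. \<exists>u. private_vertex f v u"
  then show "minimal_dominating_broadcast V E f"
    using dom private_vertex_not_dominated
    unfolding minimal_dominating_broadcast_def broadcasting_vertices_def by blast
qed

lemma private_vertex_dist_eq:
  assumes u: "private_vertex f v u" and v: "v \<in> broadcasting_vertices f" and "u \<noteq> v"
  shows "graph_dist V E v u = f v"
proof -
  have "u \<in> V" "v \<in> V" "0 < f v"
    using u v unfolding private_vertex_def broadcasting_vertices_def by auto
  then have "graph_dist V E u v \<noteq> 0" using graph_dist_eq_0_iff \<open>u \<noteq> v\<close> by simp
  moreover have "graph_dist V E u v \<le> f v" "2 \<le> f v \<longrightarrow> graph_dist V E u v = f v"
    using u unfolding private_vertex_def by auto
  ultimately show ?thesis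
    using graph_dist_commute[OF \<open>u \<in> V\<close> \<open>v \<in> V\<close>] by linarith
qed

lemma private_vertex_self: "private_vertex f v v \<Longrightarrow> v \<in> broadcasting_vertices f \<Longrightarrow> f v = 1"
  unfolding private_vertex_def broadcasting_vertices_def by (cases "2 \<le> f v") auto

lemma private_intervals_disjoint:
  assumes p: "private_vertex f v p" and q: "private_vertex f w q"
    and v: "v \<in> broadcasting_vertices f" and w: "w \<in> broadcasting_vertices f" and "v \<noteq> w"
  shows "geodesic_interval v p \<inter> geodesic_interval w q = {}"
proof -
  have False if xv: "x \<in> geodesic_interval v p" and xw: "x \<in> geodesic_interval w q" for x
  proof -
    have "p \<in> V" "q \<in> V" using p q by (simp_all add: private_vertex_vertices)
    have "v \<in> V" "w \<in> V" using v w unfolding broadcasting_vertices_def by auto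
    have "x \<in> V" using xv geodesic_interval_subset by blast
    note d_commute = graph_dist_commute[OF \<open>x \<in> V\<close>]
    have "graph_dist V E v x + graph_dist V E x p \<le> f v"
      using xv p graph_dist_commute[OF \<open>p \<in> V\<close> \<open>v \<in> V\<close>]
      unfolding geodesic_interval_def private_vertex_def by auto
    moreover have "graph_dist V E w x + graph_dist V E x q \<le> f w"
      using xw q graph_dist_commute[OF \<open>q \<in> V\<close> \<open>w \<in> V\<close>]
      unfolding geodesic_interval_def private_vertex_def by auto
    moreover have "f w < graph_dist V E x p + graph_dist V E w x"
      using private_vertex_less_dist[OF p w \<open>v \<noteq> w\<close>[symmetric]]
        graph_dist_triangle[OF \<open>p \<in> V\<close> \<open>x \<in> V\<close> \<open>w \<in> V\<close>] d_commute \<open>p \<in> V\<close> \<open>w \<in> V\<close>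
      by fastforce
    moreover have "f v < graph_dist V E x q + graph_dist V E v x"
      using private_vertex_less_dist[OF q v \<open>v \<noteq> w\<close>]
        graph_dist_triangle[OF \<open>q \<in> V\<close> \<open>x \<in> V\<close> \<open>v \<in> V\<close>] d_commute \<open>q \<in> V\<close> \<open>v \<in> V\<close>
      by fastforce
    ultimately show False by linarith
  qed
  then show ?thesis by blast
qed

lemma self_private_neighbourhood_not_in_interval:
  assumes v: "private_vertex f v v" "v \<in> broadcasting_vertices f"
    and q: "private_vertex f w q" and w: "w \<in> broadcasting_vertices f" and "v \<noteq> w"
    and "x \<in> V" and x: "graph_dist V E v x \<le> 1"
  shows "x \<notin> geodesic_interval w q"
proof
  assume xw: "x \<in> geodesic_interval w q"
  have "q \<in> V" using q by (simp add: private_vertex_vertices)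
  have "v \<in> V" "w \<in> V" using v w unfolding broadcasting_vertices_def by auto
  have "graph_dist V E w x + graph_dist V E x q \<le> f w"
    using xw q graph_dist_commute[OF \<open>q \<in> V\<close> \<open>w \<in> V\<close>]
    unfolding geodesic_interval_def private_vertex_def by auto
  moreover have "f w < graph_dist V E v w"
    using private_vertex_less_dist[OF v(1) w \<open>v \<noteq> w\<close>[symmetric]] .
  moreover have "graph_dist V E v w \<le> graph_dist V E v x + graph_dist V E w x"
    using graph_dist_triangle[OF \<open>v \<in> V\<close> \<open>x \<in> V\<close> \<open>w \<in> V\<close>]
      graph_dist_commute[OF \<open>x \<in> V\<close> \<open>w \<in> V\<close>] by simp
  ultimately have "graph_dist V E x q = 0" using x by linarith
  then have "x = q" using graph_dist_eq_0_iff[OF \<open>x \<in> V\<close> \<open>q \<in> V\<close>] by simp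
  then have "f v < graph_dist V E v x"
    using private_vertex_less_dist[OF q v(2) \<open>v \<noteq> w\<close>]
      graph_dist_commute[OF \<open>x \<in> V\<close> \<open>v \<in> V\<close>] by simp
  then show False using x v(2) unfolding broadcasting_vertices_def by simp
qed

lemma broadcast_value_less_diam:
  assumes "minimal_dominating_broadcast V E f"
    and v: "v \<in> broadcasting_vertices f" and w: "w \<in> broadcasting_vertices f" and "v \<noteq> w"
  shows "f v < diam V E"
proof -
  have "dominating_broadcast V E f"
    using assms(1) unfolding minimal_dominating_broadcast_def by simp
  then obtain q where q: "private_vertex f w q"
    using assms(1) w minimal_dominating_broadcast_iff_private_vertex by blast
  have "q \<in> V" "v \<in> V" using q v by (auto simp: private_vertex_vertices broadcasting_vertices_def)
  have "f v < graph_dist V E q v" using private_vertex_less_dist[OF q v \<open>v \<noteq> w\<close>] .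
  also have "\<dots> \<le> ecc V E q" using graph_dist_le_ecc[OF \<open>q \<in> V\<close> \<open>v \<in> V\<close>] .
  also have "\<dots> \<le> diam V E" using ecc_le_diam[OF \<open>q \<in> V\<close>] .
  finally show ?thesis .
qed

lemma minimal_dominating_broadcast_single:
  assumes "v \<in> V" "0 < ecc V E v"
  shows "minimal_dominating_broadcast V E (\<lambda>x. if x = v then ecc V E v else 0)"
    (is "minimal_dominating_broadcast V E ?f")
proof -
  have "dominating_broadcast V E ?f"
    using assms ecc_le_diam graph_dist_le_ecc graph_dist_commute
    unfolding dominating_broadcast_def broadcast_def by fastforce
  moreover obtain u where "u \<in> V" "graph_dist V E v u = ecc V E v"
    using ecc_attained[OF \<open>v \<in> V\<close>] by blast
  then have "private_vertex ?f v u"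
    using graph_dist_commute[OF \<open>u \<in> V\<close> \<open>v \<in> V\<close>]
    unfolding private_vertex_def broadcasting_vertices_def by auto
  moreover have "broadcasting_vertices ?f = {v}"
    using assms unfolding broadcasting_vertices_def by auto
  ultimately show ?thesis
    by (auto simp: minimal_dominating_broadcast_iff_private_vertex)
qed

end

text \<open>It
  provides the second vertex of the region of a broadcasting vertex that is its own private
  vertex, whose geodesic interval is just a singleton.\<close>

locale neighbour_permutation = finite_connected_graph +
  fixes s :: "'a \<Rightarrow> 'a"
  assumes inj_on_s: "inj_on s V"
    and edge_s: "v \<in> V \<Longrightarrow> E v (s v)"
begin

lemma s_vertices: "v \<in> V \<Longrightarrow> s v \<in> V"
  using edge_s edge_vertices by blast

definition private_region :: "'a \<Rightarrow> 'a \<Rightarrow> 'a set" where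
  "private_region v u = (if u = v then {v, s v} else geodesic_interval v u)"

lemma private_region_subset: "v \<in> V \<Longrightarrow> private_region v u \<subseteq> V"
  unfolding private_region_def using geodesic_interval_subset s_vertices by auto

lemma card_private_region:
  assumes u: "private_vertex f v u" and v: "v \<in> broadcasting_vertices f"
  shows "f v + 1 \<le> card (private_region v u)"
proof (cases "u = v")
  case True
  have "s v \<noteq> v" using edge_s edge_irrefl v unfolding broadcasting_vertices_def by force
  then show ?thesis
    using True private_vertex_self[OF u[unfolded True] v[unfolded True]]
    unfolding private_region_def by simp
next
  case False
  have "u \<in> V" "v \<in> V" using u v by (auto simp: private_vertex_vertices broadcasting_vertices_def)
  then show ?thesis
    using card_geodesic_interval private_vertex_dist_eq[OF u v False] False
    unfolding private_region_def by fastforce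
qed

lemma self_private_region_near:
  "x \<in> private_region v v \<Longrightarrow> v \<in> V \<Longrightarrow> x \<in> V \<and> graph_dist V E v x \<le> 1"
  unfolding private_region_def using edge_s graph_dist_edge s_vertices by auto

lemma self_private_region_disjoint_interval:
  assumes "private_vertex f v v" "v \<in> broadcasting_vertices f"
    and "private_vertex f w q" "w \<in> broadcasting_vertices f" "v \<noteq> w"
  shows "private_region v v \<inter> geodesic_interval w q = {}"
proof -
  have "v \<in> V" using assms(2) unfolding broadcasting_vertices_def by simp
  then show ?thesis
    using self_private_region_near self_private_neighbourhood_not_in_interval[OF assms] by blast
qed

lemma self_private_regions_disjoint:
  assumes v: "private_vertex f v v" "v \<in> broadcasting_vertices f"
    and w: "private_vertex f w w" "w \<in> broadcasting_vertices f" and "v \<noteq> w"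
  shows "private_region v v \<inter> private_region w w = {}"
proof -
  have "v \<in> V" "w \<in> V" using v w unfolding broadcasting_vertices_def by auto
  have "w \<notin> private_region v v"
    using self_private_region_disjoint_interval[OF v w \<open>v \<noteq> w\<close>]
      endpoint_in_geodesic_interval[OF \<open>w \<in> V\<close> \<open>w \<in> V\<close>] by blast
  moreover have "v \<notin> private_region w w"
    using self_private_region_disjoint_interval[OF w v \<open>v \<noteq> w\<close>[symmetric]]
      endpoint_in_geodesic_interval[OF \<open>v \<in> V\<close> \<open>v \<in> V\<close>] by blast
  moreover have "s v \<noteq> s w" using inj_on_s \<open>v \<in> V\<close> \<open>w \<in> V\<close> \<open>v \<noteq> w\<close> by (auto dest: inj_onD)
  ultimately show ?thesis using \<open>v \<noteq> w\<close> unfolding private_region_def by auto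
qed

lemma private_regions_disjoint:
  assumes p: "private_vertex f v p" and q: "private_vertex f w q"
    and v: "v \<in> broadcasting_vertices f" and w: "w \<in> broadcasting_vertices f" and "v \<noteq> w"
  shows "private_region v p \<inter> private_region w q = {}"
proof (cases "p = v"; cases "q = w")
  assume "p = v" "q = w"
  then show ?thesis using self_private_regions_disjoint p q v w \<open>v \<noteq> w\<close> by blast
next
  assume "p = v" "q \<noteq> w"
  then show ?thesis
    using self_private_region_disjoint_interval[OF _ v q w \<open>v \<noteq> w\<close>] p
    unfolding private_region_def[of w q] by simp
next
  assume "p \<noteq> v" "q = w"
  then show ?thesis
    using self_private_region_disjoint_interval[OF _ w p v \<open>v \<noteq> w\<close>[symmetric]] q
    unfolding private_region_def[of v p] by auto
next
  assume "p \<noteq> v" "q \<noteq> w"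
  then show ?thesis
    using private_intervals_disjoint[OF p q v w \<open>v \<noteq> w\<close>] unfolding private_region_def by simp
qed

lemma minimal_broadcast_cost_add_card_le:
  assumes "minimal_dominating_broadcast V E f"
  shows "bcost V f + card (broadcasting_vertices f) \<le> card V"
proof -
  define B where "B = broadcasting_vertices f"
  have "dominating_broadcast V E f"
    using assms unfolding minimal_dominating_broadcast_def by simp
  then have "\<forall>v \<in> B. \<exists>u. private_vertex f v u"
    using assms minimal_dominating_broadcast_iff_private_vertex unfolding B_def by blast
  then obtain p where p: "\<And>v. v \<in> B \<Longrightarrow> private_vertex f v (p v)" by metis
  have "B \<subseteq> V" unfolding B_def broadcasting_vertices_def by auto
  then have "finite B" using finite_subset finite_vertices by blast
  have regions_subset: "private_region v (p v) \<subseteq> V" if "v \<in> B" for v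
    using private_region_subset \<open>B \<subseteq> V\<close> that by blast
  have regions_disjoint: "private_region v (p v) \<inter> private_region w (p w) = {}"
    if "v \<in> B" "w \<in> B" "v \<noteq> w" for v w
    using private_regions_disjoint[OF p p] that unfolding B_def by blast
  have "bcost V f + card B = (\<Sum>v\<in>B. f v + 1)"
    unfolding bcost_eq_sum_broadcasting_vertices B_def sum.distrib by simp
  also have "\<dots> \<le> (\<Sum>v\<in>B. card (private_region v (p v)))"
    using card_private_region p unfolding B_def by (intro sum_mono) blast
  also have "\<dots> = card (\<Union>v\<in>B. private_region v (p v))"
    using \<open>finite B\<close> regions_subset finite_subset[OF _ finite_vertices] regions_disjoint
    by (intro card_UN_disjoint[symmetric]) auto
  also have "\<dots> \<le> card V"
    using regions_subset by (intro card_mono finite_vertices) blast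
  finally show ?thesis unfolding B_def .
qed

lemma minimal_broadcast_cost_le:
  assumes "minimal_dominating_broadcast V E f"
  shows "bcost V f \<le> max (diam V E) (max (2 * (diam V E - 1)) (card V - 3))"
proof -
  define B where "B = broadcasting_vertices f"
  have cost: "bcost V f = (\<Sum>v\<in>B. f v)"
    unfolding B_def by (rule bcost_eq_sum_broadcasting_vertices)
  have "B \<subseteq> V" unfolding B_def broadcasting_vertices_def by auto
  then have "finite B" using finite_subset finite_vertices by blast
  consider "card B = 0" | "card B = 1" | "card B = 2" | "3 \<le> card B" by linarith
  then show ?thesis
  proof cases
    case 1
    then show ?thesis using cost \<open>finite B\<close> by simp
  next
    case 2
    then obtain v where "B = {v}" by (rule card_1_singletonE)
    moreover have "f v \<le> diam V E"
      using assms \<open>B = {v}\<close> unfolding B_def broadcasting_vertices_def minimal_dominating_broadcast_def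
        dominating_broadcast_def broadcast_def by blast
    ultimately show ?thesis using cost by simp
  next
    case 3
    then obtain v w where "B = {v, w}" "v \<noteq> w" by (meson card_2_iff)
    moreover have "f v < diam V E" "f w < diam V E"
      using broadcast_value_less_diam[OF assms] \<open>B = {v, w}\<close> \<open>v \<noteq> w\<close> unfolding B_def by auto
    ultimately show ?thesis using cost by simp
  next
    case 4
    then show ?thesis using minimal_broadcast_cost_add_card_le[OF assms] unfolding B_def by simp
  qed
qed

end

section \<open>Cycles\<close>

definition cycle_dist :: "nat \<Rightarrow> nat \<Rightarrow> nat \<Rightarrow> nat" where
  "cycle_dist n u v =
     min (if u \<le> v then v - u else u - v) (n - (if u \<le> v then v - u else u - v))"

lemma cycle_dist_below: "v \<le> u \<Longrightarrow> cycle_dist n u v = min (u - v) (n - (u - v))"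
  unfolding cycle_dist_def by auto

lemma cycle_adj_iff:
  "cycle_adj n u v \<longleftrightarrow> u < n \<and> v < n \<and>
     (v = (if u + 1 = n then 0 else u + 1) \<or> u = (if v + 1 = n then 0 else v + 1))"
  unfolding cycle_adj_def by (auto simp: mod_if)

lemma cycle_adj_sym: "cycle_adj n u v \<Longrightarrow> cycle_adj n v u"
  unfolding cycle_adj_def by auto

lemma cycle_adj_succ: "v < n \<Longrightarrow> cycle_adj n v ((v + 1) mod n)"
  unfolding cycle_adj_def by simp

lemma walk_cycle_rev: "walk {..<n} (cycle_adj n) u k v \<Longrightarrow> walk {..<n} (cycle_adj n) v k u"
  by (rule walk_rev[of "cycle_adj n"]) (auto intro: cycle_adj_sym)

lemma walk_cycle_succ: "u < n \<Longrightarrow> walk {..<n} (cycle_adj n) u i ((u + i) mod n)"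
proof (induction i)
  case 0
  then show ?case by (auto intro: walk_refl)
next
  case (Suc i)
  have "cycle_adj n ((u + i) mod n) ((u + Suc i) mod n)"
    using cycle_adj_succ[of "(u + i) mod n" n] Suc.prems by (simp add: mod_simps)
  then show ?case using Suc by (auto intro: walk_step)
qed

lemma walk_cycle_dist:
  assumes "u < n" "v < n"
  shows "walk {..<n} (cycle_adj n) u (cycle_dist n u v) v"
proof -
  have forward: "walk {..<n} (cycle_adj n) u (v - u) v"
    and backward: "walk {..<n} (cycle_adj n) u (n - (v - u)) v"
    if "u \<le> v" "v < n" for u v
  proof -
    show "walk {..<n} (cycle_adj n) u (v - u) v"
      using walk_cycle_succ[of u n "v - u"] that by simp
    have "walk {..<n} (cycle_adj n) v (n - (v - u)) u"
      using walk_cycle_succ[of v n "n - (v - u)"] that by simp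
    then show "walk {..<n} (cycle_adj n) u (n - (v - u)) v"
      by (rule walk_cycle_rev)
  qed
  show ?thesis
  proof (cases "u \<le> v")
    case True
    then show ?thesis using forward backward assms by (simp add: cycle_dist_def min_def)
  next
    case False
    then have "walk {..<n} (cycle_adj n) u (u - v) v"
      and "walk {..<n} (cycle_adj n) u (n - (u - v)) v"
      using walk_cycle_rev[OF forward] walk_cycle_rev[OF backward] assms by simp_all
    then show ?thesis using False by (simp add: cycle_dist_def min_def)
  qed
qed

lemma cycle_dist_le_walk: "walk {..<n} (cycle_adj n) u k v \<Longrightarrow> cycle_dist n u v \<le> k"
proof (induction rule: walk.induct)
  case (walk_refl u)
  then show ?case by (simp add: cycle_dist_def)
next
  case (walk_step u k w v)
  have "u < n" using walk_vertices[OF walk_step.hyps(1)] by simp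
  with walk_step.hyps(3) have "cycle_dist n u v \<le> cycle_dist n u w + 1"
    unfolding cycle_adj_iff cycle_dist_def by (auto split: if_splits)
  then show ?case using walk_step.IH by linarith
qed

lemma finite_connected_graph_cycle:
  assumes "2 \<le> n"
  shows "finite_connected_graph {..<n} (cycle_adj n)"
proof
  show "connected_graph {..<n} (cycle_adj n)"
    unfolding connected_graph_def
    using assms walk_cycle_dist cycle_adj_sym by (auto simp: cycle_adj_iff lessThan_empty_iff)
qed

lemma graph_dist_cycle:
  assumes "u < n" "v < n"
  shows "graph_dist {..<n} (cycle_adj n) u v = cycle_dist n u v"
  unfolding graph_dist_def
  by (rule Least_equality) (use walk_cycle_dist[OF assms] cycle_dist_le_walk in auto)

lemma cycle_dist_le_half: "cycle_dist n u v \<le> n div 2"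
  unfolding cycle_dist_def by auto

lemma ecc_cycle:
  assumes "v < n"
  shows "ecc {..<n} (cycle_adj n) v = n div 2"
proof -
  have image_eq: "graph_dist {..<n} (cycle_adj n) v ` {..<n} = cycle_dist n v ` {..<n}"
    using graph_dist_cycle[OF assms] by (intro image_cong) auto
  define antipode where "antipode = (if v + n div 2 < n then v + n div 2 else v + n div 2 - n)"
  have "antipode < n" "cycle_dist n v antipode = n div 2"
    using assms unfolding antipode_def cycle_dist_def by auto
  show ?thesis
    unfolding ecc_def image_eq
  proof (rule Max_eqI)
    show "y \<le> n div 2" if "y \<in> cycle_dist n v ` {..<n}" for y
      using that cycle_dist_le_half by auto
    show "n div 2 \<in> cycle_dist n v ` {..<n}"
      using \<open>antipode < n\<close> \<open>cycle_dist n v antipode = n div 2\<close> by force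
  qed simp
qed

lemma diam_cycle:
  assumes "0 < n"
  shows "diam {..<n} (cycle_adj n) = n div 2"
proof -
  have "ecc {..<n} (cycle_adj n) ` {..<n} = {n div 2}"
    using ecc_cycle assms by force
  then show ?thesis unfolding diam_def by simp
qed

lemma neighbour_permutation_cycle:
  assumes "2 \<le> n"
  shows "neighbour_permutation {..<n} (cycle_adj n) (\<lambda>v. (v + 1) mod n)"
proof -
  interpret finite_connected_graph "{..<n}" "cycle_adj n"
    using finite_connected_graph_cycle[OF assms] .
  show ?thesis
  proof
    show "inj_on (\<lambda>v. (v + 1) mod n) {..<n}"
      by (auto intro!: inj_onI simp: mod_Suc split: if_splits)
  qed (metis cycle_adj_succ lessThan_iff)
qed

lemma minimal_broadcast_cost_le_cycle:
  assumes "3 \<le> n" "minimal_dominating_broadcast {..<n} (cycle_adj n) f"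
  shows "bcost {..<n} f \<le> max (n div 2) (2 * (n div 2 - 1))"
proof -
  interpret neighbour_permutation "{..<n}" "cycle_adj n" "\<lambda>v. (v + 1) mod n"
    using neighbour_permutation_cycle assms(1) by simp
  have "bcost {..<n} f \<le> max (n div 2) (max (2 * (n div 2 - 1)) (n - 3))"
    using minimal_broadcast_cost_le[OF assms(2)] diam_cycle assms(1) by simp
  moreover have "n - 3 \<le> 2 * (n div 2 - 1)"
    using div_mult_mod_eq[of n 2] mod_less_divisor[of 2 n] by linarith
  ultimately show ?thesis by (simp add: le_max_iff_disj)
qed

lemma cycle_two_balls_cover:
  assumes "1 \<le> k" "j \<in> {1, 2}" "n = 2 * k + 1 + j" "u < n"
  shows "cycle_dist n u 0 \<le> k \<or> cycle_dist n u j \<le> k"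
proof (cases "k < u \<and> u \<le> k + j")
  case True
  then have "cycle_dist n u j \<le> u - j"
    using cycle_dist_below[of j u n] assms(1,2) by auto
  then show ?thesis using True by linarith
next
  case False
  then show ?thesis using cycle_dist_below[of 0 u n] assms(3,4) by auto
qed

lemma cycle_two_broadcasts_private_dist:
  assumes "j \<in> {1, 2}" "n = 2 * k + 1 + j"
  shows "cycle_dist n (k + 1 + j) 0 = k" "cycle_dist n (k + 1 + j) j = k + 1"
    and "cycle_dist n (j + k) j = k" "cycle_dist n (j + k) 0 = k + 1"
  using cycle_dist_below[of 0 "k + 1 + j" n] cycle_dist_below[of j "k + 1 + j" n]
    cycle_dist_below[of j "j + k" n] cycle_dist_below[of 0 "j + k" n] assms
  by auto

lemma cycle_two_broadcasts:
  assumes "1 \<le> k" "j \<in> {1, 2}" and n: "n = 2 * k + 1 + j"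
  defines "f \<equiv> \<lambda>v. if v = 0 \<or> v = j then k else 0"
  shows "minimal_dominating_broadcast {..<n} (cycle_adj n) f" and "bcost {..<n} f = 2 * k"
proof -
  have "2 \<le> n" using assms(1) n by simp
  interpret finite_connected_graph "{..<n}" "cycle_adj n"
    using finite_connected_graph_cycle[OF \<open>2 \<le> n\<close>] .
  have "0 < n" "j < n" "j \<noteq> 0" "k + 1 + j < n" "j + k < n" using assms(1,2) n by auto
  have half: "n div 2 = k + 1" using assms(2) n by auto
  have broadcasting: "broadcasting_vertices f = {0, j}"
    using assms unfolding broadcasting_vertices_def f_def by auto
  have "dominating_broadcast {..<n} (cycle_adj n) f"
    unfolding dominating_broadcast_def broadcast_def
  proof (intro conjI ballI allI impI)
    fix v assume "v \<in> {..<n}"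
    then show "f v \<le> diam {..<n} (cycle_adj n)" "f v \<le> ecc {..<n} (cycle_adj n) v"
      using diam_cycle ecc_cycle half unfolding f_def by auto
  next
    fix v :: nat assume "v \<notin> {..<n}"
    then show "f v = 0" using \<open>j < n\<close> unfolding f_def by auto
  next
    fix u assume "u \<in> {..<n}"
    then have "cycle_dist n u 0 \<le> k \<or> cycle_dist n u j \<le> k"
      using cycle_two_balls_cover[OF assms(1,2) n] by simp
    then show "\<exists>v\<in>{..<n}. 1 \<le> f v \<and> graph_dist {..<n} (cycle_adj n) u v \<le> f v"
    proof
      assume "cycle_dist n u 0 \<le> k"
      then show ?thesis using \<open>u \<in> {..<n}\<close> \<open>0 < n\<close> assms(1) graph_dist_cycle[of u n 0]
        unfolding f_def by (intro bexI[of _ 0]) auto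
    next
      assume "cycle_dist n u j \<le> k"
      then show ?thesis using \<open>u \<in> {..<n}\<close> \<open>j < n\<close> assms(1) graph_dist_cycle[of u n j]
        unfolding f_def by (intro bexI[of _ j]) auto
    qed
  qed
  moreover have "private_vertex f 0 (k + 1 + j)" "private_vertex f j (j + k)"
    using \<open>j \<noteq> 0\<close> \<open>k + 1 + j < n\<close> \<open>j + k < n\<close> cycle_two_broadcasts_private_dist[OF assms(2) n]
      graph_dist_cycle[OF \<open>k + 1 + j < n\<close> \<open>0 < n\<close>] graph_dist_cycle[OF \<open>k + 1 + j < n\<close> \<open>j < n\<close>]
      graph_dist_cycle[OF \<open>j + k < n\<close> \<open>j < n\<close>] graph_dist_cycle[OF \<open>j + k < n\<close> \<open>0 < n\<close>]
    unfolding private_vertex_def broadcasting by (auto simp: f_def)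
  ultimately show "minimal_dominating_broadcast {..<n} (cycle_adj n) f"
    by (auto simp: minimal_dominating_broadcast_iff_private_vertex broadcasting)
  have "bcost {..<n} f = f 0 + f j"
    using bcost_eq_sum_broadcasting_vertices[of f] broadcasting \<open>j \<noteq> 0\<close> by simp
  then show "bcost {..<n} f = 2 * k" unfolding f_def by simp
qed

lemma cycle_broadcast_cost_attained:
  assumes "3 \<le> n"
  obtains g where "minimal_dominating_broadcast {..<n} (cycle_adj n) g"
    and "bcost {..<n} g = max (n div 2) (2 * (n div 2 - 1))"
proof (cases "2 * (n div 2 - 1) \<le> n div 2")
  case True
  interpret finite_connected_graph "{..<n}" "cycle_adj n"
    using finite_connected_graph_cycle assms by simp
  let ?g = "\<lambda>v. if v = 0 then ecc {..<n} (cycle_adj n) 0 else 0"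
  have "minimal_dominating_broadcast {..<n} (cycle_adj n) ?g"
    using minimal_dominating_broadcast_single ecc_cycle assms by simp
  moreover have "bcost {..<n} ?g = max (n div 2) (2 * (n div 2 - 1))"
    using ecc_cycle assms True unfolding bcost_def by simp
  ultimately show ?thesis by (rule that)
next
  case False
  define k where "k = n div 2 - 1"
  define j where "j = n - 2 * k - 1"
  have "1 \<le> k" "j \<in> {1, 2}" "n = 2 * k + 1 + j"
    using assms False unfolding k_def j_def by auto
  then show ?thesis
    using cycle_two_broadcasts[of k j n] that False unfolding k_def by simp
qed

lemma upper_broadcast_number_cycle:
  assumes "3 \<le> n"
  shows "upper_broadcast_number {..<n} (cycle_adj n) = max (n div 2) (2 * (n div 2 - 1))"
proof -
  obtain g where "minimal_dominating_broadcast {..<n} (cycle_adj n) g"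
    and "bcost {..<n} g = max (n div 2) (2 * (n div 2 - 1))"
    using cycle_broadcast_cost_attained[OF assms] .
  then show ?thesis
    using upper_broadcast_number_eqI minimal_broadcast_cost_le_cycle[OF assms] by blast
qed

theorem mainTheorem4:
  fixes n :: nat
  assumes "n \<ge> 3"
  shows "upper_broadcast_number {..<n} (cycle_adj n) =
           (if n = 3 then 1 else if even n then n - 2 else n - 3)"
proof -
  have "max (n div 2) (2 * (n div 2 - 1)) = (if n = 3 then 1 else if even n then n - 2 else n - 3)"
    using assms by (auto elim!: evenE oddE)
  then show ?thesis using upper_broadcast_number_cycle[OF assms] by simp
qed

end
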